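(* For $n\in\{0,1,2,\dots\}$ and real $\Lambda$ with $\Lambda<j_{n,1}^2$, set \[ \sigma^{(\Lambda)}_{(n)}:=\begin{cases}\dfrac{\sqrt{-\Lambda}\,I_n'(\sqrt{-\Lambda})}{I_n(\sqrt{-\Lambda})},&\Lambda<0,\\ n,&\Lambda=0,\\ \dfrac{\sqrt{\Lambda}\,J_n'(\sqrt{\Lambda})}{J_n(\sqrt{\Lambda})},&\Lambda>0.\end{cases} \] Let $0\le n<m$ be integers. Then $\sigma^{(\Lambda)}_{(n)}<\sigma^{(\Lambda)}_{(m)}$ for all $\Lambda<j_{n,1}^2$. Consequently, for all $\Lambda<j_{0,1}^2=\lambda^{\mathrm{Dir}}_1(\mathbb{D})$ the eigenvalues of the Dirichlet-to-Neumann map $\mathcal{D}_\Lambda$ of the unit disk $\mathbb{D}$, listed in non-decreasing order with multiplicity, are $\sigma^{(\Lambda)}_k=\sigma^{(\Lambda)}_{(\lfloor (k+1)/2\rfloor)}$, $k\in\mathbb{N}$.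
   Context: $J_n$ and $I_n$ are the Bessel and modified Bessel functions of the first kind of order $n$; $j_{n,1}$ is the first positive zero of $J_n$, and $j_{n,1}<j_{m,1}$ for $n<m$. For the unit disk $\mathbb{D}\subset\mathbb{R}^2$ and $\Lambda$ not a Dirichlet eigenvalue, the Dirichlet-to-Neumann map $\mathcal{D}_\Lambda$ ($u\mapsto\partial_nU$ with $-\Delta U=\Lambda U$ in $\mathbb{D}$, $U|_{\partial\mathbb{D}}=u$) has eigenvalues $\sigma^{(\Lambda)}_{(0)}$ (simple, constant eigenfunction) and $\sigma^{(\Lambda)}_{(n)}$, $n\ge1$ (double, eigenfunctions $\cos n\theta,\sin n\theta$). *)

theory Defs
  imports "HOL-Analysis.Analysis"
begin

definition besselJ :: "nat \<Rightarrow> real \<Rightarrow> real" where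
  "besselJ n x = (\<Sum>k. (-1)^k / (fact k * fact (k + n)) * (x / 2) ^ (2 * k + n))"

definition besselI :: "nat \<Rightarrow> real \<Rightarrow> real" where
  "besselI n x = (\<Sum>k. 1 / (fact k * fact (k + n)) * (x / 2) ^ (2 * k + n))"

definition bessel_zero1 :: "nat \<Rightarrow> real" where
  "bessel_zero1 n = Inf {x. 0 < x \<and> besselJ n x = 0}"

definition dtn_sigma :: "nat \<Rightarrow> real \<Rightarrow> real" where
  "dtn_sigma n \<Lambda> =
     (if \<Lambda> < 0 then sqrt (-\<Lambda>) * deriv (besselI n) (sqrt (-\<Lambda>)) / besselI n (sqrt (-\<Lambda>))
      else if \<Lambda> = 0 then real n
      else sqrt \<Lambda> * deriv (besselJ n) (sqrt \<Lambda>) / besselJ n (sqrt \<Lambda>))"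

definition dtn_multiplicity :: "real \<Rightarrow> real \<Rightarrow> nat" where
  "dtn_multiplicity \<Lambda> v =
     (if dtn_sigma 0 \<Lambda> = v then 1 else 0) + 2 * card {n. 1 \<le> n \<and> dtn_sigma n \<Lambda> = v}"

end

theory Submission
  imports Defs
begin

text \<open>
  Write J_n(x) = (x/2)^n H_n(x^2) and I_n(x) = (x/2)^n H_n(-x^2) with the entire function
  H_n = bessel_reduced n. For every sign of Lambda this gives
  sigma_n = n - Lambda H_{n+1} / (2 H_n), and sigma_m - sigma_n = W / (H_n H_m) with
  W = (m - n) H_n H_m - Lambda/2 (H_n H_{m+1} - H_{n+1} H_m).
  By H_n' = -H_{n+1}/4 and the recurrence H_n = (n + 1) H_{n+1} - Lambda H_{n+2}/4, W satisfies
  the Euler equation Lambda W' + (m + n)/2 W = (m^2 - n^2)/2 H_n H_m, so |Lambda|^((m+n)/2) W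
  increases away from Lambda = 0, where W > 0, as long as H_n and H_m stay positive.
  For Lambda <= 0 they are positive termwise. For Lambda > 0, at a first zero of H_m we would
  have H_{m+1} >= 0 and hence W <= 0; so the first zero of H_m lies beyond that of H_n,
  which is j_{n,1}^2.
\<close>

lemma has_real_derivative_powr_mult:
  fixes W :: "real \<Rightarrow> real"
  assumes "0 < t" "(W has_real_derivative W') (at t)"
  shows "((\<lambda>s. s powr \<alpha> * W s) has_real_derivative t powr (\<alpha> - 1) * (t * W' + \<alpha> * W t)) (at t)"
proof -
  have power: "t powr \<alpha> = t powr (\<alpha> - 1) * t"
    using \<open>0 < t\<close> by (simp add: powr_diff)
  have ring: "\<alpha> * p * W t + W' * (p * t) = p * (t * W' + \<alpha> * W t)" for p
    by (simp add: algebra_simps)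
  show ?thesis
    by (rule DERIV_cong[OF DERIV_mult[OF has_real_derivative_powr[OF \<open>0 < t\<close>] assms(2)]])
      (simp only: power ring)
qed

lemma pos_of_euler_operator_pos:
  fixes W W' :: "real \<Rightarrow> real" and a \<alpha> :: real
  assumes "0 \<le> a" "0 < \<alpha>" "0 < W 0"
    and deriv: "\<And>t. 0 \<le> t \<Longrightarrow> t \<le> a \<Longrightarrow> (W has_real_derivative W' t) (at t)"
    and euler: "\<And>t. 0 < t \<Longrightarrow> t < a \<Longrightarrow> 0 < t * W' t + \<alpha> * W t"
  shows "0 < W a"
proof (cases "a = 0")
  case True
  then show ?thesis
    using \<open>0 < W 0\<close> by simp
next
  case False
  then have "0 < a"
    using assms(1) by simp
  have "(W has_real_derivative W' 0) (at 0)"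
    using deriv assms(1) by simp
  then have "W \<midarrow>0\<rightarrow> W 0"
    using DERIV_isCont isCont_def by blast
  then obtain r where "0 < r" and r: "\<And>x. x \<noteq> 0 \<and> \<bar>0 - x\<bar> < r \<Longrightarrow> 0 < W x"
    using LIM_fun_gt_zero[OF _ \<open>0 < W 0\<close>] by blast
  define s where "s = min a r / 2"
  have "0 < s" "s < a" "s < r"
    using \<open>0 < r\<close> \<open>0 < a\<close> by (simp_all add: s_def)
  then have s: "0 < s" "s < a" "0 < W s"
    using r[of s] by simp_all
  define \<Phi> where "\<Phi> t = t powr \<alpha> * W t" for t
  define \<Phi>' where "\<Phi>' t = t powr (\<alpha> - 1) * (t * W' t + \<alpha> * W t)" for t
  have "(\<Phi> has_real_derivative \<Phi>' t) (at t)" if "s \<le> t" "t \<le> a" for t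
    unfolding \<Phi>_def[abs_def] \<Phi>'_def using that s deriv[of t]
    by (intro has_real_derivative_powr_mult) auto
  then obtain z where z: "s < z" "z < a" "\<Phi> a - \<Phi> s = (a - s) * \<Phi>' z"
    using MVT2[OF \<open>s < a\<close>, of \<Phi> \<Phi>'] by auto
  have "0 < \<Phi>' z"
    using z s euler[of z] by (simp add: \<Phi>'_def)
  then have "0 < (a - s) * \<Phi>' z"
    using z by simp
  moreover have "0 < \<Phi> s"
    using s by (simp add: \<Phi>_def)
  ultimately have "0 < a powr \<alpha> * W a"
    using z(3) unfolding \<Phi>_def by linarith
  then show ?thesis
    using \<open>0 < a\<close> by (simp add: zero_less_mult_iff)
qed

lemma exists_first_zero:
  fixes f :: "real \<Rightarrow> real"
  assumes "continuous_on {a..b} f" "0 < f a" "a \<le> t" "t \<le> b" "f t \<le> 0"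
  obtains t\<^sub>0 where "a < t\<^sub>0" "t\<^sub>0 \<le> t" "f t\<^sub>0 = 0" "\<And>s. a \<le> s \<Longrightarrow> s < t\<^sub>0 \<Longrightarrow> 0 < f s"
proof -
  define Z where "Z = {a..t} \<inter> f -` {..0}"
  have cont: "continuous_on {a..t} f"
    using assms(1) by (rule continuous_on_subset) (use assms(4) in auto)
  then have "closed Z"
    unfolding Z_def by (intro continuous_closed_preimage) auto
  moreover have "t \<in> Z"
    using assms(3,5) by (simp add: Z_def)
  moreover have "bdd_below Z"
    unfolding Z_def by (rule bdd_belowI[of _ a]) auto
  ultimately have "Inf Z \<in> Z"
    by (intro closed_contains_Inf) auto
  define t\<^sub>0 where "t\<^sub>0 = Inf Z"
  have t\<^sub>0: "a \<le> t\<^sub>0" "t\<^sub>0 \<le> t" "f t\<^sub>0 \<le> 0"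
    using \<open>Inf Z \<in> Z\<close> by (auto simp: Z_def t\<^sub>0_def)
  have below: "0 < f s" if "a \<le> s" "s < t\<^sub>0" for s
  proof (rule ccontr)
    assume "\<not> 0 < f s"
    then have "s \<in> Z"
      using that t\<^sub>0 by (simp add: Z_def)
    then have "t\<^sub>0 \<le> s"
      unfolding t\<^sub>0_def using \<open>bdd_below Z\<close> by (rule cInf_lower)
    with that show False
      by simp
  qed
  have "a < t\<^sub>0"
    using t\<^sub>0 assms(2) by (cases "a = t\<^sub>0") auto
  obtain x where x: "a \<le> x" "x \<le> t\<^sub>0" "f x = 0"
    using IVT2'[of f t\<^sub>0 0 a] t\<^sub>0 assms(2) continuous_on_subset[OF cont, of "{a..t\<^sub>0}"] by auto
  then have "x = t\<^sub>0"
    using below[of x] by (cases "x < t\<^sub>0") auto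
  show ?thesis
    by (rule that[OF \<open>a < t\<^sub>0\<close> t\<^sub>0(2)]) (use x \<open>x = t\<^sub>0\<close> below in auto)
qed

lemma card_halved_index:
  fixes f :: "nat \<Rightarrow> 'a"
  assumes "inj f"
  shows "card {k. f ((k + 1) div 2) = v} = (if f 0 = v then 1 else 0) + 2 * card {n. 1 \<le> n \<and> f n = v}"
proof (cases "v \<in> range f")
  case False
  then have "{k. f ((k + 1) div 2) = v} = {}" "{n. 1 \<le> n \<and> f n = v} = {}" "f 0 \<noteq> v"
    by auto
  then show ?thesis
    by (simp only: card.empty) simp
next
  case True
  then obtain p where "v = f p"
    by blast
  then have index: "f i = v \<longleftrightarrow> i = p" for i
    using assms by (auto dest: injD)
  have "{k. f ((k + 1) div 2) = v} = (if p = 0 then {0} else {2 * p - 1, 2 * p})"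
    by (cases p) (auto simp: index)
  moreover have "{n. 1 \<le> n \<and> f n = v} = (if p = 0 then {} else {p})"
    by (auto simp: index)
  ultimately show ?thesis
    by (simp add: index)
qed

definition bessel_reduced_coeff :: "nat \<Rightarrow> nat \<Rightarrow> real" where
  "bessel_reduced_coeff n k = (-1)^k / (fact k * fact (k + n) * 4^k)"

definition bessel_reduced :: "nat \<Rightarrow> real \<Rightarrow> real" where
  "bessel_reduced n x = (\<Sum>k. bessel_reduced_coeff n k * x^k)"

lemma summable_bessel_reduced: "summable (\<lambda>k. bessel_reduced_coeff n k * x^k)"
proof (rule summable_comparison_test')
  show "summable (\<lambda>k. inverse (fact k) * \<bar>x\<bar>^k)"
    by (rule summable_exp)
  fix k
  have "1 \<le> (fact (k + n) * 4^k :: real)"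
    by (intro mult_ge1_I fact_ge_1 one_le_power) simp
  then have "fact k \<le> fact k * (fact (k + n) * 4^k :: real)"
    by (simp add: mult_le_cancel_left1)
  then have "1 / (fact k * (fact (k + n) * 4^k)) \<le> (1 / fact k :: real)"
    by (intro frac_le) simp_all
  then have "\<bar>bessel_reduced_coeff n k\<bar> \<le> inverse (fact k)"
    by (simp add: bessel_reduced_coeff_def abs_mult mult.assoc inverse_eq_divide)
  then show "norm (bessel_reduced_coeff n k * x^k) \<le> inverse (fact k) * \<bar>x\<bar>^k"
    by (simp add: abs_mult power_abs mult_right_mono)
qed

lemma diffs_bessel_reduced_coeff:
  "diffs (bessel_reduced_coeff n) = (\<lambda>k. - bessel_reduced_coeff (Suc n) k / 4)"
proof
  fix k
  have "(fact (Suc k) :: real) = real (Suc k) * fact k" by simp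
  then show "diffs (bessel_reduced_coeff n) k = - bessel_reduced_coeff (Suc n) k / 4"
    unfolding diffs_def bessel_reduced_coeff_def
    by (simp add: field_simps del: of_nat_Suc fact_Suc)
qed

lemma has_field_derivative_bessel_reduced:
  "(bessel_reduced n has_field_derivative - bessel_reduced (Suc n) x / 4) (at x within S)"
proof -
  have "(bessel_reduced n has_field_derivative (\<Sum>k. diffs (bessel_reduced_coeff n) k * x^k)) (at x)"
    unfolding bessel_reduced_def[abs_def]
    by (rule termdiffs_strong_converges_everywhere) (rule summable_bessel_reduced)
  moreover have "(\<Sum>k. diffs (bessel_reduced_coeff n) k * x^k) = - bessel_reduced (Suc n) x / 4"
    unfolding diffs_bessel_reduced_coeff bessel_reduced_def
    using suminf_divide[OF summable_bessel_reduced, of "Suc n" x 4]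
    by (simp add: suminf_minus summable_bessel_reduced summable_divide)
  ultimately show ?thesis
    by (simp add: has_field_derivative_at_within)
qed

lemma continuous_on_bessel_reduced: "continuous_on S (bessel_reduced n)"
  using has_field_derivative_bessel_reduced
  by (meson DERIV_isCont continuous_at_imp_continuous_on)

lemma bessel_reduced_0: "bessel_reduced n 0 = 1 / fact n"
  unfolding bessel_reduced_def using powser_zero[of "bessel_reduced_coeff n"]
  by (simp add: bessel_reduced_coeff_def)

lemma bessel_reduced_pos_nonpos:
  assumes "x \<le> 0"
  shows "0 < bessel_reduced n x"
proof -
  have "bessel_reduced_coeff n k * x^k = (-x)^k / (fact k * fact (k + n) * 4^k)" for k
    unfolding bessel_reduced_coeff_def by (simp add: power_minus')
  then have "0 \<le> bessel_reduced_coeff n k * x^k" for k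
    using assms by simp
  then have "(\<Sum>k\<in>{0}. bessel_reduced_coeff n k * x^k) \<le> bessel_reduced n x"
    unfolding bessel_reduced_def by (intro sum_le_suminf summable_bessel_reduced) auto
  then show ?thesis
    by (simp add: bessel_reduced_coeff_def) (meson fact_gt_zero divide_pos_pos less_le_trans zero_less_one)
qed

lemma bessel_series_eq_bessel_reduced:
  "(\<Sum>k. (-c)^k / (fact k * fact (k + n)) * (x/2)^(2*k + n))
     = (x/2)^n * bessel_reduced n (c * x^2)"
proof -
  have "(-c)^k / (fact k * fact (k + n)) * (x/2)^(2*k + n)
      = (x/2)^n * (bessel_reduced_coeff n k * (c * x^2)^k)" for k
  proof -
    have "(x/2)^(2*k + n) = (x/2)^n * ((x/2)^2)^k"
      by (simp add: power_add power_mult)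
    also have "((x/2)^2)^k = (x^2)^k / 4^k"
      by (simp add: power_divide)
    finally have "(x/2)^(2*k + n) = (x/2)^n * ((x^2)^k / 4^k)" .
    moreover have "(-c)^k = (-1)^k * c^k"
      by (rule power_minus)
    ultimately show ?thesis
      unfolding bessel_reduced_coeff_def power_mult_distrib by simp
  qed
  then show ?thesis
    unfolding bessel_reduced_def by (simp add: suminf_mult summable_bessel_reduced)
qed

lemma besselJ_eq_bessel_reduced: "besselJ n x = (x/2)^n * bessel_reduced n (x^2)"
  using bessel_series_eq_bessel_reduced[of 1 n x] by (simp add: besselJ_def)

lemma besselI_eq_bessel_reduced: "besselI n x = (x/2)^n * bessel_reduced n (-(x^2))"
  using bessel_series_eq_bessel_reduced[of "-1" n x] by (simp add: besselI_def)

definition dtn_ratio :: "nat \<Rightarrow> real \<Rightarrow> real" where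
  "dtn_ratio n \<mu> = real n - \<mu> * bessel_reduced (Suc n) \<mu> / (2 * bessel_reduced n \<mu>)"

lemma scaled_bessel_log_deriv:
  fixes n :: nat and c x :: real and f :: "real \<Rightarrow> real"
  defines "f \<equiv> \<lambda>y. (y/2)^n * bessel_reduced n (c * y^2)"
  assumes "x \<noteq> 0" and "bessel_reduced n (c * x^2) \<noteq> 0"
  shows "x * deriv f x / f x = dtn_ratio n (c * x^2)"
proof -
  let ?R = "\<lambda>k. bessel_reduced k (c * x^2)"
  have "((\<lambda>y. (y/2)^n) has_real_derivative real n * (x/2)^(n - 1) / 2) (at x)"
    by (auto intro!: derivative_eq_intros)
  moreover have "((\<lambda>y. bessel_reduced n (c * y^2)) has_real_derivative
      - ?R (Suc n) / 4 * (c * (2 * x))) (at x)"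
    by (rule DERIV_chain2[OF has_field_derivative_bessel_reduced])
      (auto intro!: derivative_eq_intros)
  ultimately have deriv_f: "deriv f x
      = real n * (x/2)^(n - 1) / 2 * ?R n + - ?R (Suc n) / 4 * (c * (2 * x)) * (x/2)^n"
    unfolding f_def by (intro DERIV_imp_deriv DERIV_mult)
  have "x * deriv f x
      = x * (real n * (x/2)^(n - 1) / 2) * ?R n - (x/2)^n * (c * x^2 / 2) * ?R (Suc n)"
    unfolding deriv_f by (simp add: algebra_simps power2_eq_square)
  also have "x * (real n * (x/2)^(n - 1) / 2) = real n * (x/2)^n"
    by (cases n) (simp_all add: field_simps)
  finally show ?thesis
    using assms unfolding dtn_ratio_def f_def by (simp add: field_simps)
qed

lemma dtn_sigma_eq_dtn_ratio:
  assumes "bessel_reduced n \<Lambda> \<noteq> 0"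
  shows "dtn_sigma n \<Lambda> = dtn_ratio n \<Lambda>"
proof -
  consider "\<Lambda> < 0" | "\<Lambda> = 0" | "\<Lambda> > 0" by linarith
  then show ?thesis
  proof cases
    case 1
    define x where "x = sqrt (-\<Lambda>)"
    have x: "x \<noteq> 0" "-1 * x^2 = \<Lambda>" using 1 by (auto simp: x_def)
    have "besselI n = (\<lambda>y. (y/2)^n * bessel_reduced n (-1 * y^2))"
      by (intro ext) (simp add: besselI_eq_bessel_reduced)
    then show ?thesis
      using 1 scaled_bessel_log_deriv[of x n "-1"] x assms
      by (simp add: dtn_sigma_def x_def[symmetric] del: mult_minus_left)
  next
    case 2
    then show ?thesis by (simp add: dtn_sigma_def dtn_ratio_def)
  next
    case 3
    define x where "x = sqrt \<Lambda>"
    have x: "x \<noteq> 0" "1 * x^2 = \<Lambda>" using 3 by (auto simp: x_def)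
    have "besselJ n = (\<lambda>y. (y/2)^n * bessel_reduced n (1 * y^2))"
      by (intro ext) (simp add: besselJ_eq_bessel_reduced)
    then show ?thesis
      using 3 scaled_bessel_log_deriv[of x n 1] x assms
      by (simp add: dtn_sigma_def x_def[symmetric] del: mult_1)
  qed
qed

lemma bessel_reduced_coeff_recurrence:
  "bessel_reduced_coeff k i = real (Suc k) * bessel_reduced_coeff (Suc k) i
     - (case i of 0 \<Rightarrow> 0 | Suc j \<Rightarrow> bessel_reduced_coeff (Suc (Suc k)) j / 4)"
proof (cases i)
  case 0
  then show ?thesis
    unfolding bessel_reduced_coeff_def by (simp add: field_simps del: of_nat_Suc)
next
  case (Suc j)
  have "(fact (Suc j) :: real) = real (Suc j) * fact j"
    by simp
  moreover have "(fact (Suc j + Suc k) :: real) = real (Suc j + Suc k) * fact (Suc j + k)"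
    by (metis add_Suc_right fact_Suc)
  moreover have "(fact (j + Suc (Suc k)) :: real) = fact (Suc j + Suc k)"
    by simp
  ultimately show ?thesis
    unfolding bessel_reduced_coeff_def Suc
    by (simp add: field_simps del: of_nat_Suc fact_Suc) (simp add: algebra_simps)
qed

lemma bessel_reduced_recurrence:
  "bessel_reduced k x = real (Suc k) * bessel_reduced (Suc k) x - x * bessel_reduced (Suc (Suc k)) x / 4"
proof -
  define g where "g i = (case i of 0 \<Rightarrow> 0 | Suc j \<Rightarrow> bessel_reduced_coeff (Suc (Suc k)) j / 4) * x^i"
    for i
  have "(\<lambda>j. g (Suc j)) sums (x * bessel_reduced (Suc (Suc k)) x / 4)"
    using sums_mult[OF summable_sums[OF summable_bessel_reduced], of "x / 4" "Suc (Suc k)" x]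
    unfolding bessel_reduced_def g_def by (simp add: algebra_simps)
  then have "g sums (x * bessel_reduced (Suc (Suc k)) x / 4 + g 0)"
    by (simp only: sums_Suc_iff)
  then have "g sums (x * bessel_reduced (Suc (Suc k)) x / 4)"
    by (simp add: g_def)
  moreover have "(\<lambda>i. real (Suc k) * (bessel_reduced_coeff (Suc k) i * x^i))
      sums (real (Suc k) * bessel_reduced (Suc k) x)"
    unfolding bessel_reduced_def by (intro sums_mult summable_sums summable_bessel_reduced)
  ultimately have "(\<lambda>i. real (Suc k) * (bessel_reduced_coeff (Suc k) i * x^i) - g i)
      sums (real (Suc k) * bessel_reduced (Suc k) x - x * bessel_reduced (Suc (Suc k)) x / 4)"
    by (intro sums_diff)
  moreover have "(\<lambda>i. real (Suc k) * (bessel_reduced_coeff (Suc k) i * x^i) - g i)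
      = (\<lambda>i. bessel_reduced_coeff k i * x^i)"
    by (simp add: bessel_reduced_coeff_recurrence[of k] g_def algebra_simps)
  ultimately show ?thesis
    unfolding bessel_reduced_def by (simp add: sums_iff)
qed

definition bessel_cross :: "nat \<Rightarrow> nat \<Rightarrow> real \<Rightarrow> real" where
  "bessel_cross n m x = (real m - real n) * bessel_reduced n x * bessel_reduced m x
     - x / 2 * (bessel_reduced n x * bessel_reduced (Suc m) x
                - bessel_reduced (Suc n) x * bessel_reduced m x)"

lemma dtn_ratio_diff:
  assumes "bessel_reduced n x \<noteq> 0" "bessel_reduced m x \<noteq> 0"
  shows "dtn_ratio m x - dtn_ratio n x = bessel_cross n m x / (bessel_reduced n x * bessel_reduced m x)"
  using assms unfolding dtn_ratio_def bessel_cross_def by (simp add: field_simps)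

definition bessel_cross_deriv :: "nat \<Rightarrow> nat \<Rightarrow> real \<Rightarrow> real" where
  "bessel_cross_deriv n m x = (real m + real n) / 4 *
     (bessel_reduced n x * bessel_reduced (Suc m) x - bessel_reduced (Suc n) x * bessel_reduced m x)"

lemma has_real_derivative_bessel_cross:
  "(bessel_cross n m has_real_derivative bessel_cross_deriv n m x) (at x)"
proof -
  let ?R = "\<lambda>k. bessel_reduced k x"
  have rec_n: "x * ?R (Suc (Suc n)) = 4 * real (Suc n) * ?R (Suc n) - 4 * ?R n"
    and rec_m: "x * ?R (Suc (Suc m)) = 4 * real (Suc m) * ?R (Suc m) - 4 * ?R m"
    using bessel_reduced_recurrence[of n x] bessel_reduced_recurrence[of m x]
    by (simp_all add: algebra_simps)
  have "(bessel_cross n m has_real_derivative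
      (real m - real n) * (- ?R (Suc n) / 4 * ?R m + ?R n * (- ?R (Suc m) / 4))
      - 1 / 2 * (?R n * ?R (Suc m) - ?R (Suc n) * ?R m)
      - (?R m * (x * ?R (Suc (Suc n))) - ?R n * (x * ?R (Suc (Suc m)))) / 8) (at x)"
    unfolding bessel_cross_def[abs_def]
    by (auto intro!: derivative_eq_intros has_field_derivative_bessel_reduced)
      (simp add: field_simps)
  then show ?thesis
    unfolding rec_n rec_m bessel_cross_deriv_def by (rule DERIV_cong) (simp add: field_simps)
qed

lemma bessel_cross_euler:
  "x * bessel_cross_deriv n m x + (real m + real n) / 2 * bessel_cross n m x
     = ((real m)^2 - (real n)^2) / 2 * bessel_reduced n x * bessel_reduced m x"
  unfolding bessel_cross_def bessel_cross_deriv_def by (simp add: field_simps power2_eq_square)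

lemma bessel_cross_0: "n < m \<Longrightarrow> 0 < bessel_cross n m 0"
  unfolding bessel_cross_def by (simp add: bessel_reduced_0)

lemma bessel_cross_pos_nonneg:
  assumes "n < m" "0 \<le> a"
    and pos: "\<And>t. 0 \<le> t \<Longrightarrow> t < a \<Longrightarrow> 0 < bessel_reduced n t \<and> 0 < bessel_reduced m t"
  shows "0 < bessel_cross n m a"
proof (rule pos_of_euler_operator_pos[where W = "bessel_cross n m" and W' = "bessel_cross_deriv n m"
      and \<alpha> = "(real m + real n) / 2"])
  show "0 \<le> a" "0 < (real m + real n) / 2" "0 < bessel_cross n m 0"
    using assms(1,2) bessel_cross_0 by simp_all
  show "(bessel_cross n m has_real_derivative bessel_cross_deriv n m t) (at t)" for t
    by (rule has_real_derivative_bessel_cross)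
  have "(real n)^2 < (real m)^2"
    using assms(1) by (simp add: power_strict_mono)
  then show "0 < t * bessel_cross_deriv n m t + (real m + real n) / 2 * bessel_cross n m t"
    if "0 < t" "t < a" for t
    unfolding bessel_cross_euler using pos[of t] that by simp
qed

lemma bessel_cross_pos_nonpos:
  assumes "n < m" "a \<le> 0"
  shows "0 < bessel_cross n m a"
proof -
  have "0 < bessel_cross n m (- (- a))"
  proof (rule pos_of_euler_operator_pos[where W = "\<lambda>t. bessel_cross n m (- t)"
        and W' = "\<lambda>t. - bessel_cross_deriv n m (- t)" and \<alpha> = "(real m + real n) / 2"])
    show "0 \<le> - a" "0 < (real m + real n) / 2" "0 < bessel_cross n m (- 0)"
      using assms bessel_cross_0 by simp_all
    show "((\<lambda>t. bessel_cross n m (- t)) has_real_derivative - bessel_cross_deriv n m (- t)) (at t)"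
      for t
      using DERIV_chain2[OF has_real_derivative_bessel_cross DERIV_minus[OF DERIV_ident]] by simp
    have "(real n)^2 < (real m)^2"
      using assms(1) by (simp add: power_strict_mono)
    then have "0 < ((real m)^2 - (real n)^2) / 2 * bessel_reduced n (- t) * bessel_reduced m (- t)"
      if "0 < t" for t
      using bessel_reduced_pos_nonpos[of "- t"] that by simp
    then show "0 < t * - bessel_cross_deriv n m (- t) + (real m + real n) / 2 * bessel_cross n m (- t)"
      if "0 < t" for t
      using bessel_cross_euler[where x = "- t"] that by (simp only: mult_minus_left mult_minus_right)
  qed
  then show ?thesis
    by simp
qed

lemma bessel_reduced_pos_interlace:
  assumes "n < m" "0 \<le> t" "t \<le> L"
    and pos: "\<And>s. 0 \<le> s \<Longrightarrow> s \<le> L \<Longrightarrow> 0 < bessel_reduced n s"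
  shows "0 < bessel_reduced m t"
proof (rule ccontr)
  assume "\<not> 0 < bessel_reduced m t"
  then obtain t\<^sub>0 where "0 < t\<^sub>0" "t\<^sub>0 \<le> t" and zero: "bessel_reduced m t\<^sub>0 = 0"
    and below: "\<And>s. 0 \<le> s \<Longrightarrow> s < t\<^sub>0 \<Longrightarrow> 0 < bessel_reduced m s"
    using exists_first_zero[OF continuous_on_bessel_reduced[of _ m], where a = 0 and b = t and t = t]
      assms(2)
    by (auto simp: bessel_reduced_0)
  have cross_pos: "0 < bessel_cross n m t\<^sub>0"
    using assms \<open>0 < t\<^sub>0\<close> \<open>t\<^sub>0 \<le> t\<close> by (intro bessel_cross_pos_nonneg below pos conjI) auto
  have cross_eq: "bessel_cross n m t\<^sub>0
      = - (t\<^sub>0 / 2 * (bessel_reduced n t\<^sub>0 * bessel_reduced (Suc m) t\<^sub>0))"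
    unfolding bessel_cross_def zero by simp
  \<comment> \<open>The derivative \<open>- bessel_reduced (Suc m) t\<^sub>0 / 4\<close> cannot be positive at a first zero.\<close>
  have "0 \<le> bessel_reduced (Suc m) t\<^sub>0"
  proof (rule ccontr)
    assume "\<not> 0 \<le> bessel_reduced (Suc m) t\<^sub>0"
    then obtain d where "0 < d" and d: "\<And>h. 0 < h \<Longrightarrow> h < d \<Longrightarrow> bessel_reduced m (t\<^sub>0 - h) < 0"
      using DERIV_pos_inc_left[OF has_field_derivative_bessel_reduced[of m t\<^sub>0 UNIV]] zero by auto
    define h where "h = min d t\<^sub>0 / 2"
    have "bessel_reduced m (t\<^sub>0 - h) < 0" "0 < bessel_reduced m (t\<^sub>0 - h)"
      using \<open>0 < d\<close> \<open>0 < t\<^sub>0\<close> by (auto simp: h_def intro!: d below)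
    then show False
      by simp
  qed
  moreover have "0 < bessel_reduced n t\<^sub>0"
    using assms \<open>0 < t\<^sub>0\<close> \<open>t\<^sub>0 \<le> t\<close> by (intro pos) auto
  ultimately have "0 \<le> t\<^sub>0 / 2 * (bessel_reduced n t\<^sub>0 * bessel_reduced (Suc m) t\<^sub>0)"
    using \<open>0 < t\<^sub>0\<close> by simp
  with cross_pos cross_eq show False
    by linarith
qed

lemma bessel_reduced_pos_below_first_zero:
  assumes "0 \<le> \<mu>" "\<mu> < (bessel_zero1 n)\<^sup>2"
  shows "0 < bessel_reduced n \<mu>"
proof (rule ccontr)
  assume "\<not> 0 < bessel_reduced n \<mu>"
  then obtain t\<^sub>0 where "0 < t\<^sub>0" "t\<^sub>0 \<le> \<mu>" "bessel_reduced n t\<^sub>0 = 0"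
    using exists_first_zero[OF continuous_on_bessel_reduced[of _ n], where a = 0 and b = \<mu> and t = \<mu>]
      assms(1)
    by (auto simp: bessel_reduced_0)
  define Z where "Z = {x. 0 < x \<and> besselJ n x = 0}"
  have "sqrt t\<^sub>0 \<in> Z"
    using \<open>0 < t\<^sub>0\<close> \<open>bessel_reduced n t\<^sub>0 = 0\<close> by (simp add: Z_def besselJ_eq_bessel_reduced)
  moreover have "bdd_below Z"
    unfolding Z_def by (rule bdd_belowI[of _ 0]) auto
  ultimately have "bessel_zero1 n \<le> sqrt t\<^sub>0" "0 \<le> bessel_zero1 n"
    unfolding bessel_zero1_def Z_def[symmetric] by (auto intro: cInf_lower cInf_greatest simp: Z_def)
  then have "(bessel_zero1 n)\<^sup>2 \<le> t\<^sub>0"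
    using \<open>0 < t\<^sub>0\<close> by (metis less_imp_le power_mono real_sqrt_pow2)
  then show False
    using assms \<open>t\<^sub>0 \<le> \<mu>\<close> by simp
qed

lemma dtn_sigma_less:
  assumes "n < m" and pos: "\<And>t. 0 \<le> t \<Longrightarrow> t \<le> \<Lambda> \<Longrightarrow> 0 < bessel_reduced n t"
  shows "dtn_sigma n \<Lambda> < dtn_sigma m \<Lambda>"
proof -
  have "0 < bessel_reduced n \<Lambda> \<and> 0 < bessel_reduced m \<Lambda> \<and> 0 < bessel_cross n m \<Lambda>"
  proof (cases "\<Lambda> \<le> 0")
    case True
    then show ?thesis
      using assms(1) by (simp add: bessel_reduced_pos_nonpos bessel_cross_pos_nonpos)
  next
    case False
    have "0 < bessel_reduced m t" if "0 \<le> t" "t \<le> \<Lambda>" for t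
      using bessel_reduced_pos_interlace[OF assms(1) that pos] .
    with False pos show ?thesis
      using assms(1) by (auto intro!: bessel_cross_pos_nonneg)
  qed
  then have "0 < dtn_ratio m \<Lambda> - dtn_ratio n \<Lambda>"
    by (simp add: dtn_ratio_diff)
  then show ?thesis
    using \<open>0 < bessel_reduced n \<Lambda> \<and> 0 < bessel_reduced m \<Lambda> \<and> _\<close>
    by (simp add: dtn_sigma_eq_dtn_ratio)
qed

lemma strict_mono_dtn_sigma:
  assumes "\<Lambda> < (bessel_zero1 0)\<^sup>2"
  shows "strict_mono (\<lambda>n. dtn_sigma n \<Lambda>)"
proof (rule strict_monoI)
  have pos0: "0 < bessel_reduced 0 t" if "0 \<le> t" "t \<le> \<Lambda>" for t
    using that assms by (intro bessel_reduced_pos_below_first_zero) auto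
  have pos: "0 < bessel_reduced n t" if "0 \<le> t" "t \<le> \<Lambda>" for n t
    using that pos0 bessel_reduced_pos_interlace[of 0 n t \<Lambda>] by (cases n) auto
  show "dtn_sigma n \<Lambda> < dtn_sigma m \<Lambda>" if "n < m" for n m
    using that pos by (rule dtn_sigma_less)
qed

theorem mainTheorem14:
  shows "(\<forall>n m \<Lambda>. n < m \<and> \<Lambda> < (bessel_zero1 n)\<^sup>2 \<longrightarrow> dtn_sigma n \<Lambda> < dtn_sigma m \<Lambda>)
    \<and> (\<forall>\<Lambda>. \<Lambda> < (bessel_zero1 0)\<^sup>2 \<longrightarrow>
         mono (\<lambda>k::nat. dtn_sigma ((k + 1) div 2) \<Lambda>)
       \<and> (\<forall>v. card {k::nat. dtn_sigma ((k + 1) div 2) \<Lambda> = v} = dtn_multiplicity \<Lambda> v))"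
proof (intro conjI allI impI)
  fix n m :: nat and \<Lambda> :: real
  assume "n < m \<and> \<Lambda> < (bessel_zero1 n)\<^sup>2"
  then show "dtn_sigma n \<Lambda> < dtn_sigma m \<Lambda>"
    by (intro dtn_sigma_less bessel_reduced_pos_below_first_zero) auto
next
  fix \<Lambda> :: real
  assume "\<Lambda> < (bessel_zero1 0)\<^sup>2"
  then have mono: "strict_mono (\<lambda>n. dtn_sigma n \<Lambda>)"
    by (rule strict_mono_dtn_sigma)
  show "mono (\<lambda>k::nat. dtn_sigma ((k + 1) div 2) \<Lambda>)"
    by (auto intro!: monoI monoD[OF strict_mono_mono[OF mono]] div_le_mono)
  show "card {k::nat. dtn_sigma ((k + 1) div 2) \<Lambda> = v} = dtn_multiplicity \<Lambda> v" for v
    using card_halved_index[OF strict_mono_imp_inj_on[OF mono]]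
    by (simp add: dtn_multiplicity_def)
qed

end
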